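(* Let $I$ be a general ring and $a\in I$. Then $a$ is quasipolar in $I$ if and only if $a=s+q$ where $s\in I$ is strongly regular, $s\in\mathrm{comm}^2(a)$, $q\in QN(I)$, and $sq=qs=0$.
   Context: A general ring is an associative ring not necessarily having an identity. For $p,q\in I$, $p*q=p+q-pq$; $Q(I)=\{q\in I\mid p*q=0=q*p \text{ for some } p\in I\}$; $\mathrm{comm}(a)=\{x\in I\mid xa=ax\}$, $\mathrm{comm}^2(a)=\{x\in I\mid xy=yx\text{ for all }y\in\mathrm{comm}(a)\}$; $QN(I)=\{q\in I\mid qx\in Q(I)\text{ for every }x\in\mathrm{comm}(q)\}$. An element $a\in I$ is quasipolar in $I$ if there is an idempotent $p=p^2\in\mathrm{comm}^2(a)$ with $a+p\in Q(I)$ and $a-ap\in QN(I)$. An element $s\in I$ is strongly regular if $s=sbs$ for some $b\in I$ with $bs=sb$. *)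

theory Defs
  imports Main
begin

text \<open>A general ring (associative, not necessarily unital) is the type class ring;
  the ring I is the whole type.\<close>

definition circ_op :: "'a::ring \<Rightarrow> 'a \<Rightarrow> 'a" where
  "circ_op p q = p + q - p * q"

definition quasi_inv_set :: "'a::ring set" where
  "quasi_inv_set = {q. \<exists>p. circ_op p q = 0 \<and> circ_op q p = 0}"

definition comm_set :: "'a::ring \<Rightarrow> 'a set" where
  "comm_set a = {x. x * a = a * x}"

definition comm2_set :: "'a::ring \<Rightarrow> 'a set" where
  "comm2_set a = {x. \<forall>y\<in>comm_set a. x * y = y * x}"

definition QN_set :: "'a::ring set" where
  "QN_set = {q. \<forall>x\<in>comm_set q. q * x \<in> quasi_inv_set}"

definition quasipolar :: "'a::ring \<Rightarrow> bool" where
  "quasipolar a \<longleftrightarrow> (\<exists>p. p * p = p \<and> p \<in> comm2_set a \<and> a + p \<in> quasi_inv_set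
      \<and> a - a * p \<in> QN_set)"

definition strongly_regular :: "'a::ring \<Rightarrow> bool" where
  "strongly_regular s \<longleftrightarrow> (\<exists>b. s = s * b * s \<and> b * s = s * b)"

end

theory Submission
  imports Defs
begin

text \<open>If a is quasipolar with spectral idempotent p, then s = a p is strongly regular with group
  inverse p r - p, where r is the quasi-inverse of a + p, and q = a - a p is the quasinilpotent
  part. Conversely, for a = s + q with s s' s = s, the idempotent e = s s' works: a - a e = q, and
  a + e splits into the mutually annihilating quasi-invertible summands s + e (quasi-inverse
  s' s s' + e) and q (quasi-invertible because q q is).\<close>

lemma mem_quasi_inv_set_iff:
  "q \<in> quasi_inv_set \<longleftrightarrow> (\<exists>p. p + q - p * q = 0 \<and> q + p - q * p = 0)"
  by (simp add: quasi_inv_set_def circ_op_def)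

lemma mem_comm2_set_iff: "x \<in> comm2_set a \<longleftrightarrow> comm_set a \<subseteq> comm_set x"
  by (auto simp: comm2_set_def comm_set_def)

lemma self_mem_comm2_set: "a \<in> comm2_set a"
  by (simp add: mem_comm2_set_iff)

lemma comm2_set_mult:
  assumes "x \<in> comm2_set a" and "y \<in> comm2_set a"
  shows "x * y \<in> comm2_set a"
  unfolding comm2_set_def comm_set_def
proof safe
  fix z
  assume "z * a = a * z"
  then have "x * z = z * x" and "y * z = z * y" using assms by (auto simp: comm2_set_def comm_set_def)
  then show "x * y * z = z * (x * y)" by (metis mult.assoc)
qed

lemma comm_quasi_inverse:
  fixes p q x :: "'a::ring"
  assumes pq: "p + q - p * q = 0" and qp: "q + p - q * p = 0" and xq: "x * q = q * x"
  shows "x * p = p * x"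
proof -
  \<comment> \<open>In the unitisation 1 - p inverts 1 - q, and x(1-p) = (1-p)(1-q)x(1-p) = (1-p)x(1-q)(1-p).\<close>
  have xq': "p * (q * x) = p * (x * q)" "q * (x * p) = x * (q * p)"
    "p * (q * (x * p)) = p * (x * (q * p))"
    using xq by (simp_all add: mult.assoc[symmetric])
  have "x - x * p = (x - x * p) - (p + q - p * q) * (x - x * p)" by (simp add: pq)
  also have "\<dots> = (x - p * x - x * q + p * x * q) - (x - p * x - x * q + p * x * q) * p"
    using xq xq' by (simp add: algebra_simps)
  also have "\<dots> = (x - p * x) - (x - p * x) * (q + p - q * p)" by (simp add: algebra_simps)
  also have "\<dots> = x - p * x" by (simp add: qp)
  finally show ?thesis by simp
qed

lemma quasi_inverse_left_annihilates:
  fixes p q z :: "'a::ring"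
  assumes "p + q - p * q = 0" and "q * z = 0"
  shows "p * z = 0"
proof -
  have "p = p * q - q" using assms(1) by (simp add: algebra_simps)
  then have "p * z = p * (q * z) - q * z" by (metis left_diff_distrib mult.assoc)
  with assms(2) show ?thesis by simp
qed

lemma quasi_inverse_right_annihilates:
  fixes p q z :: "'a::ring"
  assumes "q + p - q * p = 0" and "z * q = 0"
  shows "z * p = 0"
proof -
  have "p = q * p - q" using assms(1) by (simp add: algebra_simps)
  then have "z * p = (z * q) * p - z * q" by (metis right_diff_distrib mult.assoc)
  with assms(2) show ?thesis by simp
qed

lemma quasi_inv_set_add_orthogonal:
  fixes x y :: "'a::ring"
  assumes "x \<in> quasi_inv_set" and "y \<in> quasi_inv_set" and xy: "x * y = 0" and yx: "y * x = 0"
  shows "x + y \<in> quasi_inv_set"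
proof -
  obtain x' where x1: "x' + x - x' * x = 0" and x2: "x + x' - x * x' = 0"
    using assms(1) by (auto simp: mem_quasi_inv_set_iff)
  obtain y' where y1: "y' + y - y' * y = 0" and y2: "y + y' - y * y' = 0"
    using assms(2) by (auto simp: mem_quasi_inv_set_iff)
  have "x' * y = 0" by (rule quasi_inverse_left_annihilates[OF x1 xy])
  moreover have "y' * x = 0" by (rule quasi_inverse_left_annihilates[OF y1 yx])
  moreover have "x * y' = 0" by (rule quasi_inverse_right_annihilates[OF y2 xy])
  moreover have "y * x' = 0" by (rule quasi_inverse_right_annihilates[OF x2 yx])
  ultimately have "(x' + y') + (x + y) - (x' + y') * (x + y) = 0"
    and "(x + y) + (x' + y') - (x + y) * (x' + y') = 0"
    using x1 x2 y1 y2 xy yx by (simp_all add: algebra_simps)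
  then show ?thesis by (auto simp: mem_quasi_inv_set_iff)
qed

lemma quasi_inv_set_of_square:
  fixes q :: "'a::ring"
  assumes "q * q \<in> quasi_inv_set"
  shows "q \<in> quasi_inv_set"
proof -
  obtain r where r1: "r + q * q - r * (q * q) = 0" and r2: "q * q + r - (q * q) * r = 0"
    using assms by (auto simp: mem_quasi_inv_set_iff)
  have rq: "q * r = r * q" by (rule comm_quasi_inverse[OF r1 r2]) (simp add: mult.assoc)
  \<comment> \<open>1 - t = (1 + q)(1 - r), since (1 - q)(1 + q) = 1 - q q.\<close>
  define t where "t = r + q * r - q"
  have "t + q - t * q = 0" and "q + t - q * t = 0"
    using r1 r2 rq unfolding t_def by (simp_all add: algebra_simps)
  then show ?thesis by (auto simp: mem_quasi_inv_set_iff)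
qed

lemma QN_set_subset_quasi_inv_set: "QN_set \<subseteq> quasi_inv_set"
proof
  fix q :: 'a
  assume "q \<in> QN_set"
  moreover have "q \<in> comm_set q" by (simp add: comm_set_def)
  ultimately have "q * q \<in> quasi_inv_set" by (simp add: QN_set_def)
  then show "q \<in> quasi_inv_set" by (rule quasi_inv_set_of_square)
qed

lemma comm_set_subset_comm_set_mult_inner_inverse:
  fixes s b :: "'a::ring"
  assumes sbs: "s * b * s = s" and bs: "b * s = s * b"
  shows "comm_set s \<subseteq> comm_set (s * b)"
proof
  fix y
  assume "y \<in> comm_set s"
  then have ys: "y * s = s * y" by (simp add: comm_set_def)
  have s_e: "s * (s * b) = s" using sbs bs by (metis mult.assoc)
  have "y * (s * b) - (s * b) * y * (s * b) = (y * s - (s * b) * (y * s)) * b"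
    by (simp add: algebra_simps)
  also have "\<dots> = (s * y - (s * b) * s * y) * b" using ys by (simp add: mult.assoc)
  also have "\<dots> = 0" using sbs by simp
  finally have "y * (s * b) = (s * b) * y * (s * b)" by simp
  moreover have "(s * b) * y - (s * b) * y * (s * b) = b * (s * y - s * y * (s * b))"
    using bs by (simp add: algebra_simps) (metis mult.assoc)
  moreover have "\<dots> = b * (y * s - y * (s * (s * b)))" using ys by (metis mult.assoc)
  ultimately have "y * (s * b) = (s * b) * y" using s_e by simp
  then show "y \<in> comm_set (s * b)" by (simp add: comm_set_def)
qed

lemma strongly_regular_add_idempotent_quasi_inv:
  fixes s b :: "'a::ring"
  assumes sbs: "s * b * s = s" and bs: "b * s = s * b"
  shows "s + s * b \<in> quasi_inv_set"
proof -
  define e where "e = s * b"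
  define s' where "s' = b * s * b"
  have "e * e = e" "s * e = s" "e * s = s" "s' * s = e" "s * s' = e" "s' * e = s'" "e * s' = s'"
    unfolding e_def s'_def using sbs bs by (metis mult.assoc)+
  then have "(s' + e) + (s + e) - (s' + e) * (s + e) = 0"
    and "(s + e) + (s' + e) - (s + e) * (s' + e) = 0"
    by (simp_all add: algebra_simps)
  then show ?thesis unfolding e_def by (auto simp: mem_quasi_inv_set_iff)
qed

lemma quasipolar_strongly_regular_part:
  fixes a p :: "'a::ring"
  assumes pp: "p * p = p" and pa: "p * a = a * p" and "a + p \<in> quasi_inv_set"
  shows "strongly_regular (a * p)"
proof -
  obtain r where r1: "r + (a + p) - r * (a + p) = 0" and r2: "(a + p) + r - (a + p) * r = 0"
    using assms(3) by (auto simp: mem_quasi_inv_set_iff)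
  have ra: "a * r = r * a"
    by (rule comm_quasi_inverse[OF r1 r2]) (simp add: algebra_simps pa)
  have rp: "p * r = r * p"
    by (rule comm_quasi_inverse[OF r1 r2]) (simp add: algebra_simps pa pp)
  have "(r + (a + p) - r * (a + p)) * p = 0" using r1 by simp
  then have p_eq: "p = r * a * p - a * p" using pp by (simp add: algebra_simps)
  define b where "b = p * r - p"
  have "(a * p) * b = a * (p * p) * r - a * (p * p)" unfolding b_def by (simp add: algebra_simps)
  also have "\<dots> = r * a * p - a * p" using pp ra rp by (metis mult.assoc)
  finally have sb: "(a * p) * b = p" using p_eq by simp
  have "b * (a * p) = p * (r * a * p) - p * a * p" unfolding b_def by (simp add: algebra_simps)
  also have "\<dots> = r * a * p - a * p" using pp pa rp by (metis mult.assoc)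
  finally have bs: "b * (a * p) = p" using p_eq by simp
  have "(a * p) * b * (a * p) = a * p" using sb pp pa by (metis mult.assoc)
  with sb bs show ?thesis unfolding strongly_regular_def by metis
qed

lemma comm2_set_mult_inner_inverse:
  fixes s b :: "'a::ring"
  assumes "s \<in> comm2_set a" and "s * b * s = s" and "b * s = s * b"
  shows "s * b \<in> comm2_set a"
  using assms comm_set_subset_comm_set_mult_inner_inverse unfolding mem_comm2_set_iff by blast

lemma quasi_inv_set_add_inner_idempotent:
  fixes s b q :: "'a::ring"
  assumes sbs: "s * b * s = s" and bs: "b * s = s * b"
    and "q \<in> quasi_inv_set" and sq: "s * q = 0" and qs: "q * s = 0"
  shows "s + q + s * b \<in> quasi_inv_set"
proof -
  have "s * b * q = 0" and "q * (s * b) = 0"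
    using bs sq qs by (metis mult.assoc mult_zero_left mult_zero_right)+
  then have "(s + s * b) * q = 0" and "q * (s + s * b) = 0"
    using sq qs by (simp_all add: algebra_simps)
  with strongly_regular_add_idempotent_quasi_inv[OF sbs bs] \<open>q \<in> quasi_inv_set\<close>
  have "(s + s * b) + q \<in> quasi_inv_set" by (simp add: quasi_inv_set_add_orthogonal)
  then show ?thesis by (simp add: algebra_simps)
qed

theorem theorem2p16:
  fixes a :: "'a::ring"
  shows "quasipolar a \<longleftrightarrow>
    (\<exists>s q. a = s + q \<and> strongly_regular s \<and> s \<in> comm2_set a \<and> q \<in> QN_set
       \<and> s * q = 0 \<and> q * s = 0)"
proof
  assume "quasipolar a"
  then obtain p where pp: "p * p = p" and p_comm2: "p \<in> comm2_set a"
    and quasi_inv: "a + p \<in> quasi_inv_set" and QN: "a - a * p \<in> QN_set"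
    unfolding quasipolar_def by blast
  have pa: "p * a = a * p" using p_comm2 by (simp add: comm2_set_def comm_set_def)
  have "a * p * p = a * p" and "p * a * p = a * p" using pp pa by (simp_all add: mult.assoc)
  then have "(a * p) * (a - a * p) = 0" and "(a - a * p) * (a * p) = 0"
    using pa by (simp_all add: algebra_simps) (simp_all add: mult.assoc[symmetric])
  moreover have "a * p \<in> comm2_set a" using self_mem_comm2_set p_comm2 by (rule comm2_set_mult)
  moreover have "strongly_regular (a * p)"
    using pp pa quasi_inv by (rule quasipolar_strongly_regular_part)
  ultimately show "\<exists>s q. a = s + q \<and> strongly_regular s \<and> s \<in> comm2_set a \<and> q \<in> QN_set
       \<and> s * q = 0 \<and> q * s = 0"
    using QN by (intro exI[of _ "a * p"] exI[of _ "a - a * p"]) simp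
next
  assume "\<exists>s q. a = s + q \<and> strongly_regular s \<and> s \<in> comm2_set a \<and> q \<in> QN_set
       \<and> s * q = 0 \<and> q * s = 0"
  then obtain s q b where a: "a = s + q" and sbs: "s * b * s = s" and bs: "b * s = s * b"
    and s_comm2: "s \<in> comm2_set a" and q_QN: "q \<in> QN_set" and sq: "s * q = 0" and qs: "q * s = 0"
    unfolding strongly_regular_def by metis
  have "s * b * (s * b) = s * b" and "s * (s * b) = s" using sbs bs by (metis mult.assoc)+
  moreover have "q * (s * b) = 0" using qs by (metis mult.assoc mult_zero_left)
  ultimately have "a - a * (s * b) = q" unfolding a by (simp add: algebra_simps)
  moreover have "a + s * b \<in> quasi_inv_set"
    using quasi_inv_set_add_inner_idempotent[OF sbs bs _ sq qs] QN_set_subset_quasi_inv_set q_QN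
    unfolding a by blast
  ultimately show "quasipolar a"
    unfolding quasipolar_def using comm2_set_mult_inner_inverse[OF s_comm2 sbs bs] q_QN
    \<open>s * b * (s * b) = s * b\<close> by auto
qed

end
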